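(* Consider $N$ sub-operators $\mathcal{R}^{[i]}$, $i\in\mathcal{V}=\{1,\dots,N\}$, each with $\mathcal{L}_2$-gain at most $\gamma^{[i]}>0$ (dissipative with respect to the supply $s^{[i]}$ in the context), interconnected via matrices $M_{vz},M_{vw},M_{uz}$ satisfying Assumption 2, and let $\gamma_R>0$. For each $i$, let $b^{[i]}\in\mathbb{R}$ be arbitrary and set $$\alpha^{[i]}=h^{[i]}+\max_{j\in\mathcal{A}_{z_i}}\Big(\sum_{k=1}^{q}|m_{kj}|\Big)+\big(b^{[i]}\big)^2,$$ assumed to be $>0$. Choose $$\gamma^{[i]}=\begin{cases}\left(\dfrac{1}{\alpha^{[i]}}\min\left\{\dfrac{\gamma_R^2}{\max_{j\in\mathcal{A}^1_{u_i}}\big(\sum_{k=1}^r|m_{jk}|\big)\gamma_R^2+1},\ \dfrac{1}{\max_{j\in\mathcal{A}^0_{u_i}}\big(\sum_{k=1}^r|m_{jk}|\big)}\right\}\right)^{1/2}, & i\in\mathcal{V}^1,\\[3ex] \left(\dfrac{1}{\alpha^{[i]}\max_{j\in\mathcal{A}^0_{u_i}}\big(\sum_{k=1}^r|m_{jk}|\big)}\right)^{1/2}, & i\notin\mathcal{V}^1,\end{cases}$$ where, for $i\in\mathcal{V}^1$ with $\mathcal{A}^0_{u_i}=\emptyset$ or with $\max_{j\in\mathcal{A}^0_{u_i}}\sum_k|m_{jk}|=0$, the second entry of the minimum is omitted, and for $i\notin\mathcal{V}^1$ it is assumed that $\max_{j\in\mathcal{A}^0_{u_i}}\sum_k|m_{jk}|>0$.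 Then, with these $\alpha^{[i]}$ and $\gamma^{[i]}$, the matrix inequality $$\begin{bmatrix} M_{vz} & M_{vw}\\ I & 0\\ 0 & I\\ M_{uz} & 0\end{bmatrix}^{\top}\begin{bmatrix}\mathrm{blkdiag}(\Pi_{N,v},-\Pi_{N,z}) & 0\\ 0 & -S\end{bmatrix}\begin{bmatrix} M_{vz} & M_{vw}\\ I & 0\\ 0 & I\\ M_{uz} & 0\end{bmatrix}\preceq 0$$ holds, for every choice of the free parameters $b^{[i]}$ (and of any further parameters of the sub-operators that do not affect their gain bound $\gamma^{[i]}$). Consequently the interconnected operator $\mathcal{R}:\widehat{\mathbf{w}}\mapsto\mathbf{u}$ (assumed well posed) lies in $\mathcal{L}_2$, with $\mathcal{L}_2$-gain at most $\gamma_R$.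
   Context: Sub-operators: $\mathcal{R}^{[i]}:l^{q_i}\to l^{r_i}$ with state-space form $\xi^{[i]}_{t+1}=\rho^{[i]}(\xi^{[i]}_t,v^{[i]}_t)$, $z^{[i]}_t=\chi^{[i]}(\xi^{[i]}_t,v^{[i]}_t)$, having $\mathcal{L}_2$-gain at most $\gamma^{[i]}$ in the sense that there is a nonnegative storage function $V^{[i]}$ with $V^{[i]}(\xi^{[i]}_{t+1})-V^{[i]}(\xi^{[i]}_t)\le \gamma^{[i]2}|v^{[i]}_t|^2-|z^{[i]}_t|^2$ for all $t$. (In the paper these are Recurrent Equilibrium Networks, whose parametrization guarantees gain at most any prescribed $\gamma^{[i]}$ for all values of their parameters.) Stacked signals: $v=\mathrm{col}(v^{[1]},\dots,v^{[N]})\in\mathbb{R}^q$, $z=\mathrm{col}(z^{[1]},\dots,z^{[N]})\in\mathbb{R}^r$, $\widehat{w}\in\mathbb{R}^n$, $u\in\mathbb{R}^m$, interconnected by $v=M_{vz}z+M_{vw}\widehat{w}$, $u=M_{uz}z$, with $M_{vz}\in\mathbb{R}^{q\times r}$, $M_{vw}\in\mathbb{R}^{q\times n}$, $M_{uz}\in\mathbb{R}^{m\times r}$. An operator is in $\mathcal{L}_2$ if it is causal and maps square-summable sequences to square-summable sequences. Assumption 2: (a) there is a permutation matrix $C\in\{0,1\}^{q\times q}$ with $CM_{vw}=\begin{bmatrix}I_n\\ 0_{(q-n)\times n}\end{bmatrix}$; (b) $M_{uz}^\top M_{uz}=H=\mathrm{diag}(h)$ for some $h\in\mathbb{R}^r$.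 Notation: $m_{jk}$ denotes the $(j,k)$ entry of $M_{vz}$. $\mathcal{A}_{u_i}\subseteq\{1,\dots,q\}$ is the set of indices of the components of $v$ forming $v^{[i]}$; $\mathcal{A}_{z_i}\subseteq\{1,\dots,r\}$ is the set of indices of the components of $z$ forming $z^{[i]}$. $\mathcal{A}^1_{u_i}=\{k\in\mathcal{A}_{u_i}:(M_{vw}\mathbf{1})_k=1\}$ and $\mathcal{A}^0_{u_i}=\{k\in\mathcal{A}_{u_i}:(M_{vw}\mathbf{1})_k=0\}$, where $\mathbf{1}$ is the all-ones vector. $\mathcal{V}^1=\{i\in\mathcal{V}:\mathcal{A}^1_{u_i}\neq\emptyset\}$ (the out-connected sub-operators). $h^{[i]}=\max_{j\in\mathcal{A}_{z_i}}h_j$. $S=\mathrm{blkdiag}(\gamma_R^2I_n,-I_m)$, $\Pi_{N,v}=\mathrm{blkdiag}(\alpha^{[1]}\gamma^{[1]2}I_{q_1},\dots,\alpha^{[N]}\gamma^{[N]2}I_{q_N})$, $\Pi_{N,z}=\mathrm{blkdiag}(\alpha^{[1]}I_{r_1},\dots,\alpha^{[N]}I_{r_N})$. *)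

theory Defs
  imports Complex_Main "Jordan_Normal_Form.Matrix" "HOL-Combinatorics.Permutations"
begin

text \<open>Conventions: components of v (dimension q) and z (dimension r) are indexed from 0.
  Sub-operators are indexed by i < N. The partition of the components of v (resp. z)
  among the sub-operators is given by functions bu (resp. bz): component k of v belongs
  to v^[bu k], component j of z belongs to z^[bz j].\<close>

definition Au :: "(nat \<Rightarrow> nat) \<Rightarrow> nat \<Rightarrow> nat \<Rightarrow> nat set" where
  "Au bu q i = {k. k < q \<and> bu k = i}"

definition Az :: "(nat \<Rightarrow> nat) \<Rightarrow> nat \<Rightarrow> nat \<Rightarrow> nat set" where
  "Az bz r i = {j. j < r \<and> bz j = i}"

definition A1 :: "real mat \<Rightarrow> (nat \<Rightarrow> nat) \<Rightarrow> nat \<Rightarrow> nat set" where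
  "A1 Mvw bu i = {k \<in> Au bu (dim_row Mvw) i. (\<Sum>l<dim_col Mvw. Mvw $$ (k,l)) = 1}"

definition A0 :: "real mat \<Rightarrow> (nat \<Rightarrow> nat) \<Rightarrow> nat \<Rightarrow> nat set" where
  "A0 Mvw bu i = {k \<in> Au bu (dim_row Mvw) i. (\<Sum>l<dim_col Mvw. Mvw $$ (k,l)) = 0}"

definition rowsum :: "real mat \<Rightarrow> nat \<Rightarrow> real" where
  "rowsum M j = (\<Sum>k<dim_col M. \<bar>M $$ (j,k)\<bar>)"

definition colsum :: "real mat \<Rightarrow> nat \<Rightarrow> real" where
  "colsum M j = (\<Sum>k<dim_row M. \<bar>M $$ (k,j)\<bar>)"

definition alpha :: "real mat \<Rightarrow> (nat \<Rightarrow> real) \<Rightarrow> (nat \<Rightarrow> nat) \<Rightarrow> (nat \<Rightarrow> real) \<Rightarrow> nat \<Rightarrow> real" where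
  "alpha Mvz h bz b i =
     Max (h ` Az bz (dim_col Mvz) i) + Max (colsum Mvz ` Az bz (dim_col Mvz) i) + (b i)\<^sup>2"

definition gamma :: "real \<Rightarrow> real mat \<Rightarrow> real mat \<Rightarrow> (nat \<Rightarrow> nat) \<Rightarrow> real \<Rightarrow> nat \<Rightarrow> real" where
  "gamma gR Mvz Mvw bu a i =
     (if A1 Mvw bu i \<noteq> {} then
        (let R1 = Max (rowsum Mvz ` A1 Mvw bu i);
             e1 = gR\<^sup>2 / (R1 * gR\<^sup>2 + 1)
         in if A0 Mvw bu i = {} \<or> Max (rowsum Mvz ` A0 Mvw bu i) = 0
            then sqrt (e1 / a)
            else sqrt (min e1 (1 / Max (rowsum Mvz ` A0 Mvw bu i)) / a))
      else sqrt (1 / (a * Max (rowsum Mvz ` A0 Mvw bu i))))"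

definition perm_mat :: "real mat \<Rightarrow> nat \<Rightarrow> bool" where
  "perm_mat C q \<longleftrightarrow> C \<in> carrier_mat q q \<and>
     (\<exists>\<pi>. \<pi> permutes {..<q} \<and> (\<forall>a<q. \<forall>c<q. C $$ (a,c) = (if c = \<pi> a then 1 else 0)))"

definition diag_mat :: "nat \<Rightarrow> (nat \<Rightarrow> real) \<Rightarrow> real mat" where
  "diag_mat d dg = mat d d (\<lambda>(a,c). if a = c then dg a else 0)"

text \<open>The outer factor [Mvz Mvw; I 0; 0 I; Muz 0] of size (q+r+n+m) x (r+n).\<close>
definition outer_mat :: "real mat \<Rightarrow> real mat \<Rightarrow> real mat \<Rightarrow> real mat" where
  "outer_mat Mvz Mvw Muz =
    (let q = dim_row Mvz; r = dim_col Mvz; n = dim_col Mvw; m = dim_row Muz in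
     mat (q+r+n+m) (r+n) (\<lambda>(a,c).
       if a < q then (if c < r then Mvz $$ (a,c) else Mvw $$ (a, c - r))
       else if a < q + r then (if c = a - q then 1 else 0)
       else if a < q + r + n then (if c \<ge> r \<and> c - r = a - q - r then 1 else 0)
       else (if c < r then Muz $$ (a - q - r - n, c) else 0)))"

text \<open>The inner matrix blkdiag(Pi_{N,v}, -Pi_{N,z}, -S), S = blkdiag(gR^2 I_n, -I_m).\<close>
definition inner_mat :: "nat \<Rightarrow> nat \<Rightarrow> nat \<Rightarrow> nat \<Rightarrow> (nat \<Rightarrow> nat) \<Rightarrow> (nat \<Rightarrow> nat)
    \<Rightarrow> (nat \<Rightarrow> real) \<Rightarrow> (nat \<Rightarrow> real) \<Rightarrow> real \<Rightarrow> real mat" where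
  "inner_mat q r n m bu bz al ga gR = diag_mat (q+r+n+m) (\<lambda>a.
       if a < q then al (bu a) * (ga (bu a))\<^sup>2
       else if a < q + r then - al (bz (a - q))
       else if a < q + r + n then - gR\<^sup>2
       else 1)"

definition neg_semidef :: "real mat \<Rightarrow> bool" where
  "neg_semidef A \<longleftrightarrow> A \<in> carrier_mat (dim_row A) (dim_row A) \<and>
     (\<forall>x \<in> carrier_vec (dim_row A). x \<bullet> (A *\<^sub>v x) \<le> 0)"

text \<open>Input of sub-operator i: the components of v belonging to v^[i]
  (represented as a q-vector vanishing outside A_{u_i}).\<close>
definition mask :: "(nat \<Rightarrow> nat) \<Rightarrow> nat \<Rightarrow> real vec \<Rightarrow> real vec" where
  "mask bu i v = vec (dim_vec v) (\<lambda>k. if bu k = i then v $ k else 0)"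

definition is_traj :: "nat \<Rightarrow> real mat \<Rightarrow> real mat \<Rightarrow> real mat \<Rightarrow> (nat \<Rightarrow> nat) \<Rightarrow> (nat \<Rightarrow> nat)
   \<Rightarrow> (nat \<Rightarrow> 'x \<Rightarrow> real vec \<Rightarrow> 'x) \<Rightarrow> (nat \<Rightarrow> 'x \<Rightarrow> real vec \<Rightarrow> real vec)
   \<Rightarrow> (nat \<Rightarrow> nat \<Rightarrow> 'x) \<Rightarrow> (nat \<Rightarrow> real vec) \<Rightarrow> (nat \<Rightarrow> real vec) \<Rightarrow> (nat \<Rightarrow> real vec)
   \<Rightarrow> (nat \<Rightarrow> real vec) \<Rightarrow> bool" where
  "is_traj N Mvz Mvw Muz bu bz \<rho> \<chi> \<xi> v z w u \<longleftrightarrow>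
     (\<forall>t. v t \<in> carrier_vec (dim_row Mvz) \<and> z t \<in> carrier_vec (dim_col Mvz) \<and>
          w t \<in> carrier_vec (dim_col Mvw) \<and> u t \<in> carrier_vec (dim_row Muz) \<and>
          (\<forall>i<N. \<xi> (Suc t) i = \<rho> i (\<xi> t i) (mask bu i (v t))) \<and>
          (\<forall>j<dim_col Mvz. z t $ j = \<chi> (bz j) (\<xi> t (bz j)) (mask bu (bz j) (v t)) $ j) \<and>
          v t = Mvz *\<^sub>v z t + Mvw *\<^sub>v w t \<and>
          u t = Muz *\<^sub>v z t)"

end

theory Submission
  imports Defs
begin

text \<open>Give a component \<open>v_k\<close> of \<open>v^[i]\<close> the weight \<open>c_k = \<alpha>^[i] (\<gamma>^[i])^2\<close>. By Assumption 2
  \<open>M_vw\<close> is a selection matrix, so \<open>v_k\<close> is the \<open>k\<close>-th entry of \<open>M_vz z\<close> plus at most one entry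
  \<open>w_l\<close> of \<open>\<hat>w\<close>. A weighted Cauchy-Schwarz inequality gives
  \<open>c_k v_k^2 \<le> \<Sum>_j |m_kj| z_j^2 + \<gamma>_R^2 w_l^2\<close> as soon as \<open>c_k\<close> times the \<open>k\<close>-th absolute row sum
  of \<open>M_vz\<close>, enlarged by \<open>1/\<gamma>_R^2\<close> on rows that receive \<open>\<hat>w\<close>, is at most 1, and the choice of
  \<open>\<gamma>^[i]\<close> guarantees exactly this. Summing over \<open>k\<close> turns row sums into column sums, which
  \<open>\<alpha>^[i]\<close> dominates together with \<open>h_j\<close>, while \<open>\<Sum>_j h_j z_j^2 = |M_uz z|^2\<close>. This is the matrix
  inequality read as a quadratic form in \<open>(z, \<hat>w)\<close>. The \<open>\<alpha>\<close>-weighted sum of the storage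
  functions is then a storage function of the interconnection for the supply
  \<open>\<gamma>_R^2 |\<hat>w|^2 - |u|^2\<close>, and telescoping gives square summability of \<open>u\<close>.\<close>

lemma square_add_le_mult:
  fixes A P Q p y :: real
  assumes "A\<^sup>2 \<le> P * Q" "P \<ge> 0" "Q \<ge> 0" "p \<ge> 0"
  shows "(p * y + A)\<^sup>2 \<le> (p + P) * (p * y\<^sup>2 + Q)"
proof -
  have "(2 * y * A)\<^sup>2 \<le> (Q + P * y\<^sup>2)\<^sup>2"
  proof -
    have "(2 * y * A)\<^sup>2 = 4 * y\<^sup>2 * A\<^sup>2" by (simp add: power2_eq_square)
    also have "\<dots> \<le> 4 * y\<^sup>2 * (P * Q)" using assms(1) by (simp add: mult_left_mono)
    also have "\<dots> = (Q + P * y\<^sup>2)\<^sup>2 - (Q - P * y\<^sup>2)\<^sup>2" by (simp add: power2_eq_square algebra_simps)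
    finally show ?thesis using zero_le_power2[of "Q - P * y\<^sup>2"] by linarith
  qed
  moreover have "0 \<le> Q + P * y\<^sup>2" using assms(2,3) by simp
  ultimately have "2 * y * A \<le> Q + P * y\<^sup>2" by (rule power2_le_imp_le)
  then have "p * (2 * y * A) \<le> p * (Q + P * y\<^sup>2)"
    using assms(4) by (rule mult_left_mono)
  moreover have "(p + P) * (p * y\<^sup>2 + Q) - (p * y + A)\<^sup>2
      = p * (Q + P * y\<^sup>2) - p * (2 * y * A) + (P * Q - A\<^sup>2)"
    by (simp add: power2_eq_square algebra_simps)
  ultimately show ?thesis using assms(1) by linarith
qed

lemma weighted_Cauchy_Schwarz:
  fixes p y :: "'a \<Rightarrow> real"
  assumes "finite I" "\<And>i. i \<in> I \<Longrightarrow> p i \<ge> 0"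
  shows "(\<Sum>i\<in>I. p i * y i)\<^sup>2 \<le> (\<Sum>i\<in>I. p i) * (\<Sum>i\<in>I. p i * (y i)\<^sup>2)"
  using assms
proof (induction I rule: finite_induct)
  case (insert a F)
  have "(\<Sum>i\<in>insert a F. p i * y i)\<^sup>2 = (p a * y a + (\<Sum>i\<in>F. p i * y i))\<^sup>2"
    using insert by simp
  also have "\<dots> \<le> (p a + (\<Sum>i\<in>F. p i)) * (p a * (y a)\<^sup>2 + (\<Sum>i\<in>F. p i * (y i)\<^sup>2))"
    using insert by (intro square_add_le_mult) (auto intro!: sum_nonneg)
  also have "\<dots> = (\<Sum>i\<in>insert a F. p i) * (\<Sum>i\<in>insert a F. p i * (y i)\<^sup>2)"
    using insert by simp
  finally show ?case .
qed simp

lemma abs_weighted_Cauchy_Schwarz: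
  fixes a z :: "'a \<Rightarrow> real"
  assumes "finite I"
  shows "(\<Sum>i\<in>I. a i * z i)\<^sup>2 \<le> (\<Sum>i\<in>I. \<bar>a i\<bar>) * (\<Sum>i\<in>I. \<bar>a i\<bar> * (z i)\<^sup>2)"
proof -
  define y where "y i = (if a i \<ge> 0 then z i else - z i)" for i
  have "a i * z i = \<bar>a i\<bar> * y i" "\<bar>a i\<bar> * (z i)\<^sup>2 = \<bar>a i\<bar> * (y i)\<^sup>2" for i
    by (simp_all add: y_def)
  then show ?thesis by (simp only:) (rule weighted_Cauchy_Schwarz[OF assms]; simp)
qed

lemma weighted_square_sum_add_le:
  fixes a z :: "'a \<Rightarrow> real" and c g w :: real
  assumes "finite I" "g > 0" "c \<ge> 0" "c * ((\<Sum>i\<in>I. \<bar>a i\<bar>) + 1 / g\<^sup>2) \<le> 1"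
  shows "c * ((\<Sum>i\<in>I. a i * z i) + w)\<^sup>2 \<le> (\<Sum>i\<in>I. \<bar>a i\<bar> * (z i)\<^sup>2) + g\<^sup>2 * w\<^sup>2"
proof -
  let ?R = "\<Sum>i\<in>I. \<bar>a i\<bar>" and ?Q = "\<Sum>i\<in>I. \<bar>a i\<bar> * (z i)\<^sup>2"
  \<comment> \<open>\<open>w\<close> enters as one more term \<open>(1/g^2) (g^2 w)\<close> with weight \<open>1/g^2\<close>\<close>
  have "(1 / g\<^sup>2 * (g\<^sup>2 * w) + (\<Sum>i\<in>I. a i * z i))\<^sup>2
      \<le> (1 / g\<^sup>2 + ?R) * (1 / g\<^sup>2 * (g\<^sup>2 * w)\<^sup>2 + ?Q)"
    by (rule square_add_le_mult[OF abs_weighted_Cauchy_Schwarz[OF assms(1)]])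
      (auto intro!: sum_nonneg)
  moreover have "1 / g\<^sup>2 * (g\<^sup>2 * w) = w" "1 / g\<^sup>2 * (g\<^sup>2 * w)\<^sup>2 = g\<^sup>2 * w\<^sup>2"
    using assms(2) by (auto simp: power2_eq_square field_simps)
  ultimately have "((\<Sum>i\<in>I. a i * z i) + w)\<^sup>2 \<le> (?R + 1 / g\<^sup>2) * (?Q + g\<^sup>2 * w\<^sup>2)"
    by (simp add: add.commute)
  then have "c * ((\<Sum>i\<in>I. a i * z i) + w)\<^sup>2 \<le> c * (?R + 1 / g\<^sup>2) * (?Q + g\<^sup>2 * w\<^sup>2)"
    using assms(3) by (simp add: mult_left_mono mult.assoc)
  also have "\<dots> \<le> ?Q + g\<^sup>2 * w\<^sup>2"
    using assms(2-4) by (intro mult_left_le_one_le) (auto intro!: add_nonneg_nonneg sum_nonneg)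
  finally show ?thesis .
qed

lemma weighted_square_sum_le:
  fixes a z :: "'a \<Rightarrow> real" and c :: real
  assumes "finite I" "c \<ge> 0" "c * (\<Sum>i\<in>I. \<bar>a i\<bar>) \<le> 1"
  shows "c * (\<Sum>i\<in>I. a i * z i)\<^sup>2 \<le> (\<Sum>i\<in>I. \<bar>a i\<bar> * (z i)\<^sup>2)"
proof -
  have "c * (\<Sum>i\<in>I. a i * z i)\<^sup>2 \<le> c * (\<Sum>i\<in>I. \<bar>a i\<bar>) * (\<Sum>i\<in>I. \<bar>a i\<bar> * (z i)\<^sup>2)"
    using abs_weighted_Cauchy_Schwarz[OF assms(1)] assms(2) by (simp add: mult_left_mono mult.assoc)
  also have "\<dots> \<le> (\<Sum>i\<in>I. \<bar>a i\<bar> * (z i)\<^sup>2)"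
    using assms(2,3) by (intro mult_left_le_one_le) (auto intro!: sum_nonneg)
  finally show ?thesis .
qed

lemma summable_of_dissipation:
  fixes W a b :: "nat \<Rightarrow> real" and c :: real
  assumes "\<And>t. W t \<ge> 0" "\<And>t. a t \<ge> 0" "\<And>t. b t \<ge> 0" "c \<ge> 0"
    and "\<And>t. W (Suc t) - W t \<le> c * a t - b t" and "summable a"
  shows "summable b"
proof (rule summableI_nonneg_bounded)
  fix T
  have "W T - W 0 \<le> (\<Sum>t<T. c * a t - b t)"
    unfolding sum_lessThan_telescope[symmetric] by (rule sum_mono) (use assms(5) in simp)
  also have "\<dots> \<le> c * suminf a - (\<Sum>t<T. b t)"
    using sum_le_suminf[OF assms(6), of "{..<T}"] assms(2,4)
    by (simp add: sum_subtractf sum_distrib_left[symmetric] mult_left_mono)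
  finally show "(\<Sum>t<T. b t) \<le> c * suminf a + W 0" using assms(1)[of T] by linarith
qed (use assms(3) in simp)

lemma sum_lessThan_add: "(\<Sum>i<a + (b::nat). f i) = (\<Sum>i<a. f i) + (\<Sum>i<b. f (a + i))"
  by (induction b) (simp_all add: add.assoc)

lemma scalar_prod_self_nonneg: "(v :: real vec) \<bullet> v \<ge> 0"
  unfolding scalar_prod_def by (rule sum_nonneg) simp

lemma rowsum_nonneg: "rowsum M j \<ge> 0"
  unfolding rowsum_def by (rule sum_nonneg) simp

text \<open>\<open>driven\<close> records whether row \<open>k\<close> of \<open>M_vw\<close> selects a component of \<open>\<hat>w\<close>, i.e. whether
  \<open>k \<in> A^1\<close>; such rows pay an extra \<open>1/\<gamma>_R^2\<close> in the row sum.\<close>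
definition admissible_weight :: "real mat \<Rightarrow> real \<Rightarrow> bool \<Rightarrow> nat \<Rightarrow> real \<Rightarrow> bool" where
  "admissible_weight M gR driven k c \<longleftrightarrow>
     0 \<le> c \<and> c * (rowsum M k + (if driven then 1 / gR\<^sup>2 else 0)) \<le> 1"

lemma mult_le_one_if_le_inverse:
  fixes c R R0 :: real
  assumes "0 \<le> c" "c \<le> 1 / R0" "0 \<le> R" "R \<le> R0"
  shows "c * R \<le> 1"
proof -
  have "c * R \<le> 1 / R0 * R0" using assms by (intro mult_mono) auto
  also have "\<dots> \<le> 1" by (cases "R0 = 0") simp_all
  finally show ?thesis .
qed

lemma mult_add_inverse_square_le_one:
  fixes c R R1 g :: real
  assumes "0 \<le> c" "c \<le> g\<^sup>2 / (R1 * g\<^sup>2 + 1)" "0 \<le> R" "R \<le> R1" "g > 0"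
  shows "c * (R + 1 / g\<^sup>2) \<le> 1"
proof -
  have "R1 * g\<^sup>2 + 1 > 0" using assms by (intro add_nonneg_pos mult_nonneg_nonneg) auto
  have "c * (R + 1 / g\<^sup>2) \<le> g\<^sup>2 / (R1 * g\<^sup>2 + 1) * ((R1 * g\<^sup>2 + 1) / g\<^sup>2)"
    using assms by (intro mult_mono) (auto simp: field_simps)
  also have "\<dots> = 1" using \<open>R1 * g\<^sup>2 + 1 > 0\<close> assms(5) by simp
  finally show ?thesis .
qed

subsection \<open>The selection matrix \<open>M_vw\<close>\<close>

lemma selection_of_perm_mat_mult:
  fixes Mvw C :: "real mat"
  assumes W: "Mvw \<in> carrier_mat q n" and C: "perm_mat C q"
    and CW: "C * Mvw = mat q n (\<lambda>(a,c). if a = c then 1 else 0)"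
  obtains \<sigma> where "\<sigma> permutes {..<q}"
    "\<forall>k<q. \<forall>l<n. Mvw $$ (k,l) = (if \<sigma> k = l then 1 else 0)"
proof -
  obtain \<pi> where Cq: "C \<in> carrier_mat q q" and \<pi>: "\<pi> permutes {..<q}"
    and Cv: "\<forall>a<q. \<forall>c<q. C $$ (a,c) = (if c = \<pi> a then 1 else 0)"
    using C unfolding perm_mat_def by blast
  have \<pi>_rows: "Mvw $$ (\<pi> a, l) = (if a = l then 1 else 0)" if a: "a < q" and l: "l < n" for a l
  proof -
    have \<pi>a: "\<pi> a < q" using permutes_in_image[OF \<pi>, of a] a by simp
    have "(if a = l then 1 else 0) = (C * Mvw) $$ (a,l)" using CW a l by simp
    also have "\<dots> = (\<Sum>c\<in>{0..<q}. C $$ (a,c) * Mvw $$ (c,l))"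
      using Cq W a l by (simp add: scalar_prod_def)
    also have "\<dots> = (\<Sum>c\<in>{0..<q}. if \<pi> a = c then Mvw $$ (c,l) else 0)"
      using Cv a by (intro sum.cong) auto
    also have "\<dots> = Mvw $$ (\<pi> a, l)" using \<pi>a by (simp add: sum.delta)
    finally show ?thesis by simp
  qed
  let ?\<sigma> = "Hilbert_Choice.inv \<pi>"
  have "Mvw $$ (k,l) = (if ?\<sigma> k = l then 1 else 0)" if k: "k < q" and l: "l < n" for k l
    using \<pi>_rows[OF _ l, of "?\<sigma> k"] permutes_in_image[OF permutes_inv[OF \<pi>], of k]
      permutes_inverses(1)[OF \<pi>, of k] k by simp
  then show ?thesis using that permutes_inv[OF \<pi>] by blast
qed

context
  fixes Mvw :: "real mat" and \<sigma> :: "nat \<Rightarrow> nat" and q n :: nat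
  assumes Mvw: "Mvw \<in> carrier_mat q n"
    and sel: "\<forall>k<q. \<forall>l<n. Mvw $$ (k,l) = (if \<sigma> k = l then 1 else 0)"
begin

lemma selection_mult_vec_nth:
  assumes "w \<in> carrier_vec n" "k < q"
  shows "(Mvw *\<^sub>v w) $ k = (if \<sigma> k < n then w $ (\<sigma> k) else 0)"
proof -
  have "(Mvw *\<^sub>v w) $ k = (\<Sum>l\<in>{0..<n}. Mvw $$ (k,l) * w $ l)"
    using Mvw assms by (simp add: scalar_prod_def)
  also have "\<dots> = (\<Sum>l\<in>{0..<n}. if \<sigma> k = l then w $ l else 0)"
    using sel assms by (intro sum.cong) auto
  finally show ?thesis by (simp add: sum.delta)
qed

lemma selection_row_sum:
  assumes "k < q"
  shows "(\<Sum>l<dim_col Mvw. Mvw $$ (k,l)) = (if \<sigma> k < n then 1 else 0)"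
proof -
  have "(\<Sum>l<dim_col Mvw. Mvw $$ (k,l)) = (\<Sum>l<n. if \<sigma> k = l then 1 else 0)"
    using Mvw sel assms by (intro sum.cong) auto
  then show ?thesis by (simp add: sum.delta)
qed

lemma A1_iff_selected: "k < q \<Longrightarrow> k \<in> A1 Mvw bu (bu k) \<longleftrightarrow> \<sigma> k < n"
  using selection_row_sum Mvw unfolding A1_def Au_def by auto

lemma A0_iff_not_selected: "k < q \<Longrightarrow> k \<in> A0 Mvw bu (bu k) \<longleftrightarrow> \<not> \<sigma> k < n"
  using selection_row_sum Mvw unfolding A0_def Au_def by auto

lemma rowsum_le_Max_A1: "k < q \<Longrightarrow> \<sigma> k < n \<Longrightarrow> rowsum M k \<le> Max (rowsum M ` A1 Mvw bu (bu k))"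
  using A1_iff_selected[of k bu] by (intro Max_ge) (auto simp: A1_def Au_def)

lemma rowsum_le_Max_A0: "k < q \<Longrightarrow> \<not> \<sigma> k < n \<Longrightarrow> rowsum M k \<le> Max (rowsum M ` A0 Mvw bu (bu k))"
  using A0_iff_not_selected[of k bu] by (intro Max_ge) (auto simp: A0_def Au_def)

lemma gamma_admissible_weight_not_out_connected:
  fixes Mvz :: "real mat"
  assumes k: "k < q" and a: "a > 0" and A1: "A1 Mvw bu (bu k) = {}"
    and R0: "Max (rowsum Mvz ` A0 Mvw bu (bu k)) > 0"
  shows "admissible_weight Mvz gR (\<sigma> k < n) k (a * (gamma gR Mvz Mvw bu a (bu k))\<^sup>2)"
proof -
  let ?R0 = "Max (rowsum Mvz ` A0 Mvw bu (bu k))"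
  have undriven: "\<not> \<sigma> k < n" using A1 A1_iff_selected[OF k] by blast
  have "a * (gamma gR Mvz Mvw bu a (bu k))\<^sup>2 = a * (sqrt ((1 / ?R0) / a))\<^sup>2"
    using A1 unfolding gamma_def by (simp add: mult.commute)
  also have "\<dots> = 1 / ?R0" using a R0 by simp
  finally show ?thesis
    using undriven R0 rowsum_nonneg[of Mvz k] rowsum_le_Max_A0[OF k undriven]
    unfolding admissible_weight_def by (auto intro: mult_le_one_if_le_inverse)
qed

lemma gamma_admissible_weight_out_connected:
  fixes Mvz :: "real mat"
  assumes k: "k < q" and a: "a > 0" and gR: "gR > 0" and A1: "A1 Mvw bu (bu k) \<noteq> {}"
  shows "admissible_weight Mvz gR (\<sigma> k < n) k (a * (gamma gR Mvz Mvw bu a (bu k))\<^sup>2)"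
proof -
  let ?A0 = "A0 Mvw bu (bu k)" and ?c = "a * (gamma gR Mvz Mvw bu a (bu k))\<^sup>2"
  let ?R1 = "Max (rowsum Mvz ` A1 Mvw bu (bu k))" and ?R0 = "Max (rowsum Mvz ` ?A0)"
  let ?e1 = "gR\<^sup>2 / (?R1 * gR\<^sup>2 + 1)"
  have fin: "finite (A1 Mvw bu (bu k))" "finite ?A0" unfolding A1_def A0_def Au_def by auto
  obtain k1 where "k1 \<in> A1 Mvw bu (bu k)" using A1 by blast
  then have "0 \<le> ?R1" using fin rowsum_nonneg[of Mvz k1] by (intro Max_ge_iff[THEN iffD2]) auto
  then have e1: "?e1 > 0" using gR by (intro divide_pos_pos add_nonneg_pos mult_nonneg_nonneg) auto
  have rk: "0 \<le> rowsum Mvz k" by (rule rowsum_nonneg)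
  have sqrt_div: "a * (sqrt (x / a))\<^sup>2 = x" if "x \<ge> 0" for x
    using a that by simp
  have c: "0 \<le> ?c \<and> ?c \<le> ?e1 \<and> (\<not> \<sigma> k < n \<longrightarrow> ?c * rowsum Mvz k \<le> 1)"
  proof (cases "?A0 = {} \<or> ?R0 = 0")
    case True
    then have "?c = a * (sqrt (?e1 / a))\<^sup>2" using A1 unfolding gamma_def Let_def by simp
    also have "\<dots> = ?e1" using e1 by (intro sqrt_div) simp
    finally have "?c = ?e1" .
    moreover have "rowsum Mvz k = 0" if undriven: "\<not> \<sigma> k < n"
      using True rowsum_le_Max_A0[OF k undriven, where M = Mvz and bu = bu]
        A0_iff_not_selected[OF k, where bu = bu] undriven rk by auto
    ultimately show ?thesis using e1 by simp
  next
    case False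
    then obtain k0 where "k0 \<in> ?A0" by blast
    then have "0 < ?R0"
      using False fin rowsum_nonneg[of Mvz k0] by (metis Max_ge finite_imageI imageI order.trans
          order.not_eq_order_implies_strict)
    have "?c = a * (sqrt (min ?e1 (1 / ?R0) / a))\<^sup>2"
      using A1 False unfolding gamma_def Let_def by simp
    also have "\<dots> = min ?e1 (1 / ?R0)" using e1 \<open>0 < ?R0\<close> by (intro sqrt_div) simp
    finally have c: "?c = min ?e1 (1 / ?R0)" .
    then have "?c * rowsum Mvz k \<le> 1" if undriven: "\<not> \<sigma> k < n"
      using e1 \<open>0 < ?R0\<close>
      by (intro mult_le_one_if_le_inverse[OF _ _ rk rowsum_le_Max_A0[OF k undriven, where bu = bu]])
        auto
    then show ?thesis using c e1 \<open>0 < ?R0\<close> by simp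
  qed
  have "?c * (rowsum Mvz k + 1 / gR\<^sup>2) \<le> 1" if "\<sigma> k < n"
    using c gR by (intro mult_add_inverse_square_le_one[OF _ _ rk rowsum_le_Max_A1[OF k that]]) auto
  then show ?thesis using c unfolding admissible_weight_def by simp
qed

lemma gamma_admissible_weight:
  fixes Mvz :: "real mat"
  assumes "k < q" "a > 0" "gR > 0"
    and "A1 Mvw bu (bu k) = {} \<longrightarrow> Max (rowsum Mvz ` A0 Mvw bu (bu k)) > 0"
  shows "admissible_weight Mvz gR (\<sigma> k < n) k (a * (gamma gR Mvz Mvw bu a (bu k))\<^sup>2)"
  using assms gamma_admissible_weight_not_out_connected gamma_admissible_weight_out_connected
  by blast

lemma weighted_input_energy_le:
  fixes Mvz :: "real mat" and c :: "nat \<Rightarrow> real"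
  assumes Mvz: "Mvz \<in> carrier_mat q r" and z: "z \<in> carrier_vec r" and w: "w \<in> carrier_vec n"
    and \<sigma>: "\<sigma> permutes {..<q}" and "n \<le> q" and gR: "gR > 0"
    and c: "\<forall>k<q. admissible_weight Mvz gR (\<sigma> k < n) k (c k)"
  shows "(\<Sum>k<q. c k * ((Mvz *\<^sub>v z + Mvw *\<^sub>v w) $ k)\<^sup>2)
         \<le> (\<Sum>j<r. colsum Mvz j * (z $ j)\<^sup>2) + gR\<^sup>2 * (w \<bullet> w)"
proof -
  define f where "f l = (if l < n then gR\<^sup>2 * (w $ l)\<^sup>2 else 0)" for l
  have row: "c k * ((Mvz *\<^sub>v z + Mvw *\<^sub>v w) $ k)\<^sup>2
      \<le> (\<Sum>j<r. \<bar>Mvz $$ (k,j)\<bar> * (z $ j)\<^sup>2) + f (\<sigma> k)" if k: "k < q" for k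
  proof -
    have rowsum: "rowsum Mvz k = (\<Sum>j<r. \<bar>Mvz $$ (k,j)\<bar>)" using Mvz by (simp add: rowsum_def)
    have v: "(Mvz *\<^sub>v z + Mvw *\<^sub>v w) $ k = (\<Sum>j<r. Mvz $$ (k,j) * z $ j)
               + (if \<sigma> k < n then w $ (\<sigma> k) else 0)"
      using Mvz Mvw z w k selection_mult_vec_nth[OF w k]
      by (simp add: scalar_prod_def atLeast0LessThan)
    show ?thesis
    proof (cases "\<sigma> k < n")
      case True
      then have "c k * ((\<Sum>j<r. Mvz $$ (k,j) * z $ j) + w $ (\<sigma> k))\<^sup>2
          \<le> (\<Sum>j<r. \<bar>Mvz $$ (k,j)\<bar> * (z $ j)\<^sup>2) + gR\<^sup>2 * (w $ (\<sigma> k))\<^sup>2"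
        using c k gR rowsum by (intro weighted_square_sum_add_le) (auto simp: admissible_weight_def)
      then show ?thesis using True v by (simp add: f_def)
    next
      case False
      then have "c k * (\<Sum>j<r. Mvz $$ (k,j) * z $ j)\<^sup>2 \<le> (\<Sum>j<r. \<bar>Mvz $$ (k,j)\<bar> * (z $ j)\<^sup>2)"
        using c k rowsum by (intro weighted_square_sum_le) (auto simp: admissible_weight_def)
      then show ?thesis using False v by (simp add: f_def)
    qed
  qed
  have "(\<Sum>k<q. c k * ((Mvz *\<^sub>v z + Mvw *\<^sub>v w) $ k)\<^sup>2)
      \<le> (\<Sum>k<q. (\<Sum>j<r. \<bar>Mvz $$ (k,j)\<bar> * (z $ j)\<^sup>2) + f (\<sigma> k))"
    using row by (intro sum_mono) simp
  also have "\<dots> = (\<Sum>k<q. \<Sum>j<r. \<bar>Mvz $$ (k,j)\<bar> * (z $ j)\<^sup>2) + (\<Sum>k<q. f (\<sigma> k))"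
    by (simp add: sum.distrib)
  also have "(\<Sum>k<q. \<Sum>j<r. \<bar>Mvz $$ (k,j)\<bar> * (z $ j)\<^sup>2) = (\<Sum>j<r. colsum Mvz j * (z $ j)\<^sup>2)"
    using Mvz by (subst sum.swap) (simp add: colsum_def sum_distrib_right)
  also have "(\<Sum>k<q. f (\<sigma> k)) = (\<Sum>l<n + (q - n). f l)"
    using sum.permute[OF \<sigma>, of f] \<open>n \<le> q\<close> by (simp add: comp_def)
  also have "\<dots> = gR\<^sup>2 * (w \<bullet> w)"
    using w by (simp add: sum_lessThan_add f_def scalar_prod_def sum_distrib_left power2_eq_square atLeast0LessThan)
  finally show ?thesis .
qed

end

lemma diag_mat_mult_vec_nth:
  assumes "y \<in> carrier_vec d" "a < d"
  shows "(diag_mat d dg *\<^sub>v y) $ a = dg a * y $ a"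
proof -
  have "(diag_mat d dg *\<^sub>v y) $ a = (\<Sum>c\<in>{0..<d}. (if a = c then dg a else 0) * y $ c)"
    using assms by (simp add: diag_mat_def scalar_prod_def)
  also have "\<dots> = (\<Sum>c\<in>{0..<d}. if a = c then dg a * y $ c else 0)"
    by (intro sum.cong) auto
  finally show ?thesis using assms by (simp add: sum.delta)
qed

lemma diag_mat_quadratic_form:
  assumes "y \<in> carrier_vec d"
  shows "y \<bullet> (diag_mat d dg *\<^sub>v y) = (\<Sum>a<d. dg a * (y $ a)\<^sup>2)"
  using assms diag_mat_mult_vec_nth[OF assms]
  by (auto simp: scalar_prod_def diag_mat_def atLeast0LessThan power2_eq_square intro!: sum.cong)

lemma sq_norm_mult_vec_diag_gram:
  fixes M :: "real mat"
  assumes M: "M \<in> carrier_mat m r" and gram: "transpose_mat M * M = diag_mat r h"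
    and z: "z \<in> carrier_vec r"
  shows "(M *\<^sub>v z) \<bullet> (M *\<^sub>v z) = (\<Sum>j<r. h j * (z $ j)\<^sup>2)"
proof -
  have "(M *\<^sub>v z) \<bullet> (M *\<^sub>v z) = (transpose_mat M *\<^sub>v (M *\<^sub>v z)) \<bullet> z"
    using M z by (simp add: transpose_vec_mult_scalar)
  also have "transpose_mat M *\<^sub>v (M *\<^sub>v z) = diag_mat r h *\<^sub>v z"
    using M z by (simp flip: gram assoc_mult_mat_vec)
  also have "(diag_mat r h *\<^sub>v z) \<bullet> z = z \<bullet> (diag_mat r h *\<^sub>v z)"
    by (rule comm_scalar_prod[OF mult_mat_vec_carrier[OF _ z] z]) (simp add: diag_mat_def)
  finally show ?thesis by (simp add: diag_mat_quadratic_form[OF z])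
qed

lemma congruence_quadratic_form:
  fixes A D :: "real mat"
  assumes A: "A \<in> carrier_mat d e" and D: "D \<in> carrier_mat d d" and x: "x \<in> carrier_vec e"
  shows "x \<bullet> ((transpose_mat A * D * A) *\<^sub>v x) = (A *\<^sub>v x) \<bullet> (D *\<^sub>v (A *\<^sub>v x))"
proof -
  have Ax: "A *\<^sub>v x \<in> carrier_vec d" and DAx: "D *\<^sub>v (A *\<^sub>v x) \<in> carrier_vec d"
    using A D x by auto
  have "(transpose_mat A * D * A) *\<^sub>v x = (transpose_mat A * D) *\<^sub>v (A *\<^sub>v x)"
    using A D x by (intro assoc_mult_mat_vec) auto
  also have "\<dots> = transpose_mat A *\<^sub>v (D *\<^sub>v (A *\<^sub>v x))"
    using A D x by (intro assoc_mult_mat_vec) auto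
  finally have "(transpose_mat A * D * A) *\<^sub>v x = transpose_mat A *\<^sub>v (D *\<^sub>v (A *\<^sub>v x))" .
  then have "x \<bullet> ((transpose_mat A * D * A) *\<^sub>v x) = (D *\<^sub>v (A *\<^sub>v x)) \<bullet> (A *\<^sub>v x)"
    using A x DAx by (simp add: comm_scalar_prod[of x e] transpose_vec_mult_scalar)
  also have "\<dots> = (A *\<^sub>v x) \<bullet> (D *\<^sub>v (A *\<^sub>v x))"
    using DAx Ax by (rule comm_scalar_prod)
  finally show ?thesis .
qed

subsection \<open>The matrix inequality\<close>

lemma outer_mat_carrier:
  assumes "Mvz \<in> carrier_mat q r" "Mvw \<in> carrier_mat q n" "Muz \<in> carrier_mat m r"
  shows "outer_mat Mvz Mvw Muz \<in> carrier_mat (q+r+n+m) (r+n)"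
  using assms unfolding outer_mat_def Let_def by auto

lemma outer_mat_mult_vec:
  assumes d: "Mvz \<in> carrier_mat q r" "Mvw \<in> carrier_mat q n" "Muz \<in> carrier_mat m r"
    and x: "x \<in> carrier_vec (r+n)"
  defines "z \<equiv> vec r (\<lambda>j. x $ j)" and "w \<equiv> vec n (\<lambda>l. x $ (r+l))"
  shows "a < q \<Longrightarrow> (outer_mat Mvz Mvw Muz *\<^sub>v x) $ a = (Mvz *\<^sub>v z + Mvw *\<^sub>v w) $ a"
    and "j < r \<Longrightarrow> (outer_mat Mvz Mvw Muz *\<^sub>v x) $ (q+j) = z $ j"
    and "l < n \<Longrightarrow> (outer_mat Mvz Mvw Muz *\<^sub>v x) $ (q+r+l) = w $ l"
    and "b < m \<Longrightarrow> (outer_mat Mvz Mvw Muz *\<^sub>v x) $ (q+r+n+b) = (Muz *\<^sub>v z) $ b"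
proof -
  let ?O = "outer_mat Mvz Mvw Muz"
  have entry: "?O $$ (a,c) =
       (if a < q then (if c < r then Mvz $$ (a,c) else Mvw $$ (a, c - r))
       else if a < q + r then (if c = a - q then 1 else 0)
       else if a < q + r + n then (if c \<ge> r \<and> c - r = a - q - r then 1 else 0)
       else (if c < r then Muz $$ (a - q - r - n, c) else 0))"
    if "a < q+r+n+m" "c < r+n" for a c
    using d that unfolding outer_mat_def Let_def by auto
  have split: "(?O *\<^sub>v x) $ a = (\<Sum>c<r. ?O $$ (a,c) * z $ c) + (\<Sum>l<n. ?O $$ (a,r+l) * w $ l)"
    if "a < q+r+n+m" for a
    using outer_mat_carrier[OF d] that x
    by (simp add: scalar_prod_def atLeast0LessThan sum_lessThan_add z_def w_def)
  have mult_vec_nth: "(M *\<^sub>v y) $ k = (\<Sum>c<d. M $$ (k,c) * y $ c)"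
    if "M \<in> carrier_mat e d" "y \<in> carrier_vec d" "k < e" for M :: "real mat" and y d e k
    using that by (simp add: scalar_prod_def atLeast0LessThan)
  show "(?O *\<^sub>v x) $ a = (Mvz *\<^sub>v z + Mvw *\<^sub>v w) $ a" if "a < q"
    using that d split[of a] entry mult_vec_nth[OF d(1), of z] mult_vec_nth[OF d(2), of w]
    by (simp add: z_def w_def)
  show "(?O *\<^sub>v x) $ (q+j) = z $ j" if "j < r"
  proof -
    have "(\<Sum>c<r. ?O $$ (q+j,c) * z $ c) = (\<Sum>c<r. if c = j then z $ c else 0)"
      using that entry by (intro sum.cong) auto
    moreover have "(\<Sum>l<n. ?O $$ (q+j,r+l) * w $ l) = 0"
      using that entry by (intro sum.neutral) auto
    ultimately show ?thesis using that split[of "q+j"] by simp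
  qed
  show "(?O *\<^sub>v x) $ (q+r+l) = w $ l" if "l < n"
  proof -
    have "(\<Sum>c<r. ?O $$ (q+r+l,c) * z $ c) = 0"
      using that entry by (intro sum.neutral) auto
    moreover have "(\<Sum>l'<n. ?O $$ (q+r+l,r+l') * w $ l') = (\<Sum>l'<n. if l' = l then w $ l' else 0)"
      using that entry by (intro sum.cong) auto
    ultimately show ?thesis using that split[of "q+r+l"] by simp
  qed
  show "(?O *\<^sub>v x) $ (q+r+n+b) = (Muz *\<^sub>v z) $ b" if "b < m"
    using that d split[of "q+r+n+b"] entry mult_vec_nth[OF d(3), of z] by (simp add: z_def)
qed

lemma outer_inner_quadratic_form:
  assumes d: "Mvz \<in> carrier_mat q r" "Mvw \<in> carrier_mat q n" "Muz \<in> carrier_mat m r"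
    and x: "x \<in> carrier_vec (r+n)"
  defines "z \<equiv> vec r (\<lambda>j. x $ j)" and "w \<equiv> vec n (\<lambda>l. x $ (r+l))"
  shows "x \<bullet> ((transpose_mat (outer_mat Mvz Mvw Muz) * inner_mat q r n m bu bz al ga gR
             * outer_mat Mvz Mvw Muz) *\<^sub>v x)
     = (\<Sum>k<q. al (bu k) * (ga (bu k))\<^sup>2 * ((Mvz *\<^sub>v z + Mvw *\<^sub>v w) $ k)\<^sup>2)
       - (\<Sum>j<r. al (bz j) * (z $ j)\<^sup>2) - gR\<^sup>2 * (w \<bullet> w) + (Muz *\<^sub>v z) \<bullet> (Muz *\<^sub>v z)"
proof -
  let ?O = "outer_mat Mvz Mvw Muz"
  define y where "y = ?O *\<^sub>v x"
  have y: "y \<in> carrier_vec (q+r+n+m)" unfolding y_def using outer_mat_carrier[OF d] x by simp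
  note y_nth = outer_mat_mult_vec[OF d x, folded z_def w_def y_def]
  have "x \<bullet> ((transpose_mat ?O * inner_mat q r n m bu bz al ga gR * ?O) *\<^sub>v x)
      = y \<bullet> (inner_mat q r n m bu bz al ga gR *\<^sub>v y)"
    unfolding y_def using outer_mat_carrier[OF d] x
    by (intro congruence_quadratic_form) (auto simp: inner_mat_def diag_mat_def)
  also have "\<dots> = (\<Sum>k<q. al (bu k) * (ga (bu k))\<^sup>2 * (y $ k)\<^sup>2)
      + (\<Sum>j<r. - al (bz j) * (y $ (q+j))\<^sup>2) + (\<Sum>l<n. - gR\<^sup>2 * (y $ (q+r+l))\<^sup>2)
      + (\<Sum>b<m. (y $ (q+r+n+b))\<^sup>2)"
    unfolding inner_mat_def diag_mat_quadratic_form[OF y] by (simp add: sum_lessThan_add)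
  also have "\<dots> = (\<Sum>k<q. al (bu k) * (ga (bu k))\<^sup>2 * ((Mvz *\<^sub>v z + Mvw *\<^sub>v w) $ k)\<^sup>2)
      - (\<Sum>j<r. al (bz j) * (z $ j)\<^sup>2) - gR\<^sup>2 * (w \<bullet> w) + (Muz *\<^sub>v z) \<bullet> (Muz *\<^sub>v z)"
    using d by (simp add: y_nth scalar_prod_def z_def w_def power2_eq_square atLeast0LessThan
        sum_negf sum_distrib_left)
  finally show ?thesis .
qed

lemma neg_semidef_of_supply_bound:
  assumes d: "Mvz \<in> carrier_mat q r" "Mvw \<in> carrier_mat q n" "Muz \<in> carrier_mat m r"
    and bound: "\<And>z w. z \<in> carrier_vec r \<Longrightarrow> w \<in> carrier_vec n \<Longrightarrow>
      (\<Sum>k<q. al (bu k) * (ga (bu k))\<^sup>2 * ((Mvz *\<^sub>v z + Mvw *\<^sub>v w) $ k)\<^sup>2)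
        - (\<Sum>j<r. al (bz j) * (z $ j)\<^sup>2) \<le> gR\<^sup>2 * (w \<bullet> w) - (Muz *\<^sub>v z) \<bullet> (Muz *\<^sub>v z)"
  shows "neg_semidef (transpose_mat (outer_mat Mvz Mvw Muz) * inner_mat q r n m bu bz al ga gR
           * outer_mat Mvz Mvw Muz)"
proof -
  have "transpose_mat (outer_mat Mvz Mvw Muz) * inner_mat q r n m bu bz al ga gR
           * outer_mat Mvz Mvw Muz \<in> carrier_mat (r+n) (r+n)"
    using outer_mat_carrier[OF d]
    by (intro mult_carrier_mat[of _ _ "q+r+n+m"]) (auto simp: inner_mat_def diag_mat_def)
  moreover have "x \<bullet> ((transpose_mat (outer_mat Mvz Mvw Muz) * inner_mat q r n m bu bz al ga gR
           * outer_mat Mvz Mvw Muz) *\<^sub>v x) \<le> 0" if "x \<in> carrier_vec (r+n)" for x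
    using outer_inner_quadratic_form[OF d that] bound[of "vec r (\<lambda>j. x $ j)" "vec n (\<lambda>l. x $ (r+l))"]
    by simp
  ultimately show ?thesis unfolding neg_semidef_def by auto
qed

lemma alpha_ge_h_add_colsum:
  fixes Mvz :: "real mat"
  assumes "Mvz \<in> carrier_mat q r" "j < r"
  shows "h j + colsum Mvz j \<le> alpha Mvz h bz b (bz j)"
proof -
  have j: "j \<in> Az bz (dim_col Mvz) (bz j)" and fin: "finite (Az bz (dim_col Mvz) (bz j))"
    using assms unfolding Az_def by auto
  have "h j \<le> Max (h ` Az bz (dim_col Mvz) (bz j))"
    and "colsum Mvz j \<le> Max (colsum Mvz ` Az bz (dim_col Mvz) (bz j))"
    using j fin by (auto intro!: Max_ge)
  then show ?thesis unfolding alpha_def using zero_le_power2[of "b (bz j)"] by linarith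
qed

lemma supply_rate_bound:
  fixes Mvz Mvw Muz :: "real mat" and c a :: "nat \<Rightarrow> real"
  assumes Mvz: "Mvz \<in> carrier_mat q r" and Mvw: "Mvw \<in> carrier_mat q n"
    and Muz: "Muz \<in> carrier_mat m r"
    and sel: "\<forall>k<q. \<forall>l<n. Mvw $$ (k,l) = (if \<sigma> k = l then 1 else 0)"
    and \<sigma>: "\<sigma> permutes {..<q}" and "n \<le> q" and gR: "gR > 0"
    and c: "\<forall>k<q. admissible_weight Mvz gR (\<sigma> k < n) k (c k)"
    and gram: "transpose_mat Muz * Muz = diag_mat r h"
    and a: "\<And>j. j < r \<Longrightarrow> h j + colsum Mvz j \<le> a j"
    and z: "z \<in> carrier_vec r" and w: "w \<in> carrier_vec n"
  shows "(\<Sum>k<q. c k * ((Mvz *\<^sub>v z + Mvw *\<^sub>v w) $ k)\<^sup>2) - (\<Sum>j<r. a j * (z $ j)\<^sup>2)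
         \<le> gR\<^sup>2 * (w \<bullet> w) - (Muz *\<^sub>v z) \<bullet> (Muz *\<^sub>v z)"
proof -
  have "(\<Sum>j<r. colsum Mvz j * (z $ j)\<^sup>2) + (Muz *\<^sub>v z) \<bullet> (Muz *\<^sub>v z)
      = (\<Sum>j<r. (h j + colsum Mvz j) * (z $ j)\<^sup>2)"
    by (simp add: sq_norm_mult_vec_diag_gram[OF Muz gram z] algebra_simps sum.distrib)
  also have "\<dots> \<le> (\<Sum>j<r. a j * (z $ j)\<^sup>2)"
    using a by (intro sum_mono mult_right_mono) auto
  finally show ?thesis
    using weighted_input_energy_le[OF Mvw sel Mvz z w \<sigma> \<open>n \<le> q\<close> gR c] by linarith
qed

subsection \<open>Storage functions\<close>

lemma Az_eq_Au: "Az = Au"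
  unfolding Az_def Au_def by (simp add: fun_eq_iff)

lemma sum_Au_partition:
  assumes "\<forall>k<q. bu k < N"
  shows "(\<Sum>i<N. \<Sum>k\<in>Au bu q i. f k) = (\<Sum>k<q. f k)"
proof -
  have "Au bu q i = {k \<in> {..<q}. bu k = i}" for i unfolding Au_def by auto
  then show ?thesis using sum.group[of "{..<q}" "{..<N}" bu f] assms by auto
qed

lemma weighted_storage_dissipation:
  fixes V :: "nat \<Rightarrow> 'x \<Rightarrow> real" and al G :: "nat \<Rightarrow> real"
  assumes "\<forall>k<q. bu k < N" "\<forall>j<r. bz j < N" "\<forall>i<N. 0 \<le> al i"
    and step: "\<And>i. i < N \<Longrightarrow> V i (s' i) - V i (s i)
      \<le> G i * (\<Sum>k\<in>Au bu q i. (v $ k)\<^sup>2) - (\<Sum>j\<in>Az bz r i. (z $ j)\<^sup>2)"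
  shows "(\<Sum>i<N. al i * V i (s' i)) - (\<Sum>i<N. al i * V i (s i))
    \<le> (\<Sum>k<q. al (bu k) * G (bu k) * (v $ k)\<^sup>2) - (\<Sum>j<r. al (bz j) * (z $ j)\<^sup>2)"
proof -
  have "(\<Sum>i<N. al i * V i (s' i)) - (\<Sum>i<N. al i * V i (s i))
      = (\<Sum>i<N. al i * (V i (s' i) - V i (s i)))"
    by (simp add: sum_subtractf right_diff_distrib)
  also have "\<dots> \<le> (\<Sum>i<N. al i * (G i * (\<Sum>k\<in>Au bu q i. (v $ k)\<^sup>2) - (\<Sum>j\<in>Az bz r i. (z $ j)\<^sup>2)))"
    using assms(3) step by (intro sum_mono mult_left_mono) auto
  also have "\<dots> = (\<Sum>i<N. \<Sum>k\<in>Au bu q i. al (bu k) * G (bu k) * (v $ k)\<^sup>2)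
      - (\<Sum>i<N. \<Sum>j\<in>Au bz r i. al (bz j) * (z $ j)\<^sup>2)"
  proof -
    have "(\<Sum>k\<in>Au bu q i. al (bu k) * G (bu k) * (v $ k)\<^sup>2) = (\<Sum>k\<in>Au bu q i. al i * G i * (v $ k)\<^sup>2)"
      and "(\<Sum>j\<in>Au bz r i. al (bz j) * (z $ j)\<^sup>2) = (\<Sum>j\<in>Au bz r i. al i * (z $ j)\<^sup>2)" for i
      by (auto simp: Au_def intro!: sum.cong)
    then show ?thesis
      by (simp add: Az_eq_Au sum_subtractf right_diff_distrib sum_distrib_left mult.assoc)
  qed
  also have "\<dots> = (\<Sum>k<q. al (bu k) * G (bu k) * (v $ k)\<^sup>2) - (\<Sum>j<r. al (bz j) * (z $ j)\<^sup>2)"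
    using assms(1,2) by (simp add: sum_Au_partition)
  finally show ?thesis .
qed

lemma traj_storage_dissipation:
  fixes V :: "nat \<Rightarrow> 'x \<Rightarrow> real" and al G :: "nat \<Rightarrow> real"
  assumes traj: "is_traj N Mvz Mvw Muz bu bz \<rho> \<chi> \<xi> v z w u"
    and d: "Mvz \<in> carrier_mat q r" "Mvw \<in> carrier_mat q n" "Muz \<in> carrier_mat m r"
    and part: "\<forall>k<q. bu k < N" "\<forall>j<r. bz j < N" and al: "\<forall>i<N. 0 \<le> al i"
    and dissip: "\<forall>i<N. \<forall>x. \<forall>vv \<in> carrier_vec q. V i (\<rho> i x (mask bu i vv)) - V i x
        \<le> G i * (\<Sum>k\<in>Au bu q i. (vv $ k)\<^sup>2) - (\<Sum>j\<in>Az bz r i. (\<chi> i x (mask bu i vv) $ j)\<^sup>2)"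
    and bound: "\<And>z w. z \<in> carrier_vec r \<Longrightarrow> w \<in> carrier_vec n \<Longrightarrow>
      (\<Sum>k<q. al (bu k) * G (bu k) * ((Mvz *\<^sub>v z + Mvw *\<^sub>v w) $ k)\<^sup>2)
        - (\<Sum>j<r. al (bz j) * (z $ j)\<^sup>2) \<le> gR\<^sup>2 * (w \<bullet> w) - (Muz *\<^sub>v z) \<bullet> (Muz *\<^sub>v z)"
  shows "(\<Sum>i<N. al i * V i (\<xi> (Suc t) i)) - (\<Sum>i<N. al i * V i (\<xi> t i))
    \<le> gR\<^sup>2 * (w t \<bullet> w t) - u t \<bullet> u t"
proof -
  have carriers: "v t \<in> carrier_vec q" "z t \<in> carrier_vec r" "w t \<in> carrier_vec n"
    and v: "v t = Mvz *\<^sub>v z t + Mvw *\<^sub>v w t" and u: "u t = Muz *\<^sub>v z t"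
    and next_state: "\<forall>i<N. \<xi> (Suc t) i = \<rho> i (\<xi> t i) (mask bu i (v t))"
    and z_output: "\<forall>j<r. z t $ j = \<chi> (bz j) (\<xi> t (bz j)) (mask bu (bz j) (v t)) $ j"
    using traj d unfolding is_traj_def carrier_mat_def by blast+
  have "V i (\<xi> (Suc t) i) - V i (\<xi> t i)
      \<le> G i * (\<Sum>k\<in>Au bu q i. (v t $ k)\<^sup>2) - (\<Sum>j\<in>Az bz r i. (z t $ j)\<^sup>2)" if "i < N" for i
  proof -
    have "(\<Sum>j\<in>Az bz r i. (\<chi> i (\<xi> t i) (mask bu i (v t)) $ j)\<^sup>2) = (\<Sum>j\<in>Az bz r i. (z t $ j)\<^sup>2)"
      using z_output by (intro sum.cong) (auto simp: Az_def)
    then show ?thesis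
      using dissip[rule_format, OF that carriers(1), of "\<xi> t i"] next_state that by simp
  qed
  then have "(\<Sum>i<N. al i * V i (\<xi> (Suc t) i)) - (\<Sum>i<N. al i * V i (\<xi> t i))
      \<le> (\<Sum>k<q. al (bu k) * G (bu k) * (v t $ k)\<^sup>2) - (\<Sum>j<r. al (bz j) * (z t $ j)\<^sup>2)"
    by (rule weighted_storage_dissipation[OF part al])
  also have "\<dots> \<le> gR\<^sup>2 * (w t \<bullet> w t) - u t \<bullet> u t"
    unfolding v u using carriers by (intro bound)
  finally show ?thesis .
qed

theorem theorem1:
  fixes N q r n m :: nat
    and Mvz Mvw Muz :: "real mat"
    and bu bz :: "nat \<Rightarrow> nat"
    and h b :: "nat \<Rightarrow> real"
    and gR :: real
    and \<rho> :: "nat \<Rightarrow> 'x \<Rightarrow> real vec \<Rightarrow> 'x"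
    and \<chi> :: "nat \<Rightarrow> 'x \<Rightarrow> real vec \<Rightarrow> real vec"
    and V :: "nat \<Rightarrow> 'x \<Rightarrow> real"
  assumes dims: "Mvz \<in> carrier_mat q r" "Mvw \<in> carrier_mat q n" "Muz \<in> carrier_mat m r"
    and part_u: "\<forall>k<q. bu k < N" and part_z: "\<forall>j<r. bz j < N"
    and ne_u: "\<forall>i<N. Au bu q i \<noteq> {}" and ne_z: "\<forall>i<N. Az bz r i \<noteq> {}"
    and A2a: "n \<le> q" "\<exists>C. perm_mat C q \<and> C * Mvw = mat q n (\<lambda>(a,c). if a = c then 1 else 0)"
    and A2b: "transpose_mat Muz * Muz = diag_mat r h"
    and gR_pos: "gR > 0"
    and alpha_pos: "\<forall>i<N. alpha Mvz h bz b i > 0"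
    and R0_pos: "\<forall>i<N. A1 Mvw bu i = {} \<longrightarrow> Max (rowsum Mvz ` A0 Mvw bu i) > 0"
    and storage_nonneg: "\<forall>i<N. \<forall>x. V i x \<ge> 0"
    and dissip: "\<forall>i<N. \<forall>x. \<forall>vv \<in> carrier_vec q.
        V i (\<rho> i x (mask bu i vv)) - V i x
          \<le> (gamma gR Mvz Mvw bu (alpha Mvz h bz b i) i)\<^sup>2 * (\<Sum>k\<in>Au bu q i. (vv $ k)\<^sup>2)
            - (\<Sum>j\<in>Az bz r i. (\<chi> i x (mask bu i vv) $ j)\<^sup>2)"
  shows "neg_semidef
           (transpose_mat (outer_mat Mvz Mvw Muz)
            * inner_mat q r n m bu bz (alpha Mvz h bz b)
                (\<lambda>i. gamma gR Mvz Mvw bu (alpha Mvz h bz b i) i) gR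
            * outer_mat Mvz Mvw Muz)
       \<and> (\<exists>W :: (nat \<Rightarrow> 'x) \<Rightarrow> real. (\<forall>s. W s \<ge> 0) \<and>
            (\<forall>\<xi> v z w u. is_traj N Mvz Mvw Muz bu bz \<rho> \<chi> \<xi> v z w u \<longrightarrow>
               (\<forall>t. W (\<xi> (Suc t)) - W (\<xi> t) \<le> gR\<^sup>2 * (w t \<bullet> w t) - u t \<bullet> u t)))
       \<and> (\<forall>\<xi> v z w u. is_traj N Mvz Mvw Muz bu bz \<rho> \<chi> \<xi> v z w u \<longrightarrow>
            summable (\<lambda>t. w t \<bullet> w t) \<longrightarrow> summable (\<lambda>t. u t \<bullet> u t))"
proof -
  obtain \<sigma> where \<sigma>: "\<sigma> permutes {..<q}"
    and sel: "\<forall>k<q. \<forall>l<n. Mvw $$ (k,l) = (if \<sigma> k = l then 1 else 0)"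
    using A2a(2) selection_of_perm_mat_mult[OF dims(2)] by blast
  let ?al = "alpha Mvz h bz b" and ?ga = "\<lambda>i. gamma gR Mvz Mvw bu (alpha Mvz h bz b i) i"
  have weights: "\<forall>k<q. admissible_weight Mvz gR (\<sigma> k < n) k (?al (bu k) * (?ga (bu k))\<^sup>2)"
    using part_u alpha_pos R0_pos by (blast intro: gamma_admissible_weight[OF dims(2) sel _ _ gR_pos])
  have bound: "(\<Sum>k<q. ?al (bu k) * (?ga (bu k))\<^sup>2 * ((Mvz *\<^sub>v z + Mvw *\<^sub>v w) $ k)\<^sup>2)
      - (\<Sum>j<r. ?al (bz j) * (z $ j)\<^sup>2) \<le> gR\<^sup>2 * (w \<bullet> w) - (Muz *\<^sub>v z) \<bullet> (Muz *\<^sub>v z)"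
    if "z \<in> carrier_vec r" "w \<in> carrier_vec n" for z w
    using dims sel \<sigma> A2a(1) gR_pos weights A2b that alpha_ge_h_add_colsum[OF dims(1)]
    by (intro supply_rate_bound)
  define W where "W s = (\<Sum>i<N. ?al i * V i (s i))" for s :: "nat \<Rightarrow> 'x"
  have W_nonneg: "W s \<ge> 0" for s
    unfolding W_def using alpha_pos storage_nonneg by (auto intro!: sum_nonneg)
  have W_dissip: "W (\<xi> (Suc t)) - W (\<xi> t) \<le> gR\<^sup>2 * (w t \<bullet> w t) - u t \<bullet> u t"
    if "is_traj N Mvz Mvw Muz bu bz \<rho> \<chi> \<xi> v z w u" for \<xi> v z w u t
    unfolding W_def using alpha_pos
    by (intro traj_storage_dissipation[OF that dims part_u part_z _ dissip bound]) (simp add: less_imp_le)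
  have summable_u: "summable (\<lambda>t. u t \<bullet> u t)"
    if traj: "is_traj N Mvz Mvw Muz bu bz \<rho> \<chi> \<xi> v z w u" and "summable (\<lambda>t. w t \<bullet> w t)"
    for \<xi> v z w u
    by (rule summable_of_dissipation[where W = "\<lambda>t. W (\<xi> t)" and a = "\<lambda>t. w t \<bullet> w t" and c = "gR\<^sup>2"])
      (simp_all add: W_nonneg W_dissip[OF traj] scalar_prod_self_nonneg that(2))
  show ?thesis
    using neg_semidef_of_supply_bound[OF dims bound] W_nonneg W_dissip summable_u
    by (intro conjI exI[of _ W] allI impI) simp_all
qed

end
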